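(* For $s\ge3$, we have $\mathrm{ex}(n,P^{(3)}_s)=f(n,s-2)$.
   Context: An ordered $3$-uniform hypergraph is a $3$-uniform hypergraph with linearly ordered vertex set; $G$ contains $H$ if there is an order-preserving injection $f:V(H)\to V(G)$ with $f(e)\in E(G)$ for all $e\in E(H)$. $\mathrm{ex}(n,H)$ is the maximum number of edges of an $n$-vertex ordered $3$-uniform hypergraph not containing $H$. $P^{(3)}_s$ has vertices $v_1<\dots<v_s$ and edges $\{v_j,v_{j+1},v_{j+2}\}$ for $1\le j\le s-2$. Let $K^{(2)}_n$ be the complete graph on $[n]$ with the natural order. A $k$-edge-labeling $\phi$ of $K^{(2)}_n$ assigns to each pair $uv$ a label from a fixed linearly ordered set of size $k$. A triple $u<v<w$ is good (for $\phi$) if $\phi(uv)<\phi(vw)$, and bad otherwise. $f(n,k)$ is the maximum, over all $k$-edge-labelings of $K^{(2)}_n$, of the number of good triples. *)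

theory Defs
  imports Main
begin

text \<open>An ordered 3-uniform hypergraph on vertex set [n] = {1..n} (natural order)
  is given by its edge set: a set of 3-element subsets of {1..n}.\<close>
definition triples :: "nat \<Rightarrow> nat set set" where
  "triples n = {e. e \<subseteq> {1..n} \<and> card e = 3}"

definition ord_hypergraph3 :: "nat \<Rightarrow> nat set set \<Rightarrow> bool" where
  "ord_hypergraph3 n E \<longleftrightarrow> E \<subseteq> triples n"

definition ord_contains :: "nat \<Rightarrow> nat set set \<Rightarrow> nat \<Rightarrow> nat set set \<Rightarrow> bool" where
  "ord_contains n G m H \<longleftrightarrow>
     (\<exists>f. strict_mono_on {1..m} f \<and> f ` {1..m} \<subseteq> {1..n} \<and> (\<forall>e\<in>H. f ` e \<in> G))"

definition ex3 :: "nat \<Rightarrow> nat \<Rightarrow> nat set set \<Rightarrow> nat" where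
  "ex3 n m H = Max {card G | G. ord_hypergraph3 n G \<and> \<not> ord_contains n G m H}"

definition tight_path :: "nat \<Rightarrow> nat set set" where
  "tight_path s = {{j, j+1, j+2} | j. 1 \<le> j \<and> j + 2 \<le> s}"

text \<open>A k-edge-labeling of K_n on [n]: the pair u<v gets label phi u v \<in> {0..<k}
  (labels form a linearly ordered set of size k; values off such pairs are irrelevant).\<close>
definition edge_labeling :: "nat \<Rightarrow> nat \<Rightarrow> (nat \<Rightarrow> nat \<Rightarrow> nat) \<Rightarrow> bool" where
  "edge_labeling n k \<phi> \<longleftrightarrow> (\<forall>u v. 1 \<le> u \<and> u < v \<and> v \<le> n \<longrightarrow> \<phi> u v < k)"

definition good_triples :: "nat \<Rightarrow> (nat \<Rightarrow> nat \<Rightarrow> nat) \<Rightarrow> (nat \<times> nat \<times> nat) set" where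
  "good_triples n \<phi> = {(u, v, w). 1 \<le> u \<and> u < v \<and> v < w \<and> w \<le> n \<and> \<phi> u v < \<phi> v w}"

definition f_good :: "nat \<Rightarrow> nat \<Rightarrow> nat" where
  "f_good n k = Max {card (good_triples n \<phi>) | \<phi>. edge_labeling n k \<phi>}"

end

theory Submission
  imports Defs
begin

(* Label each pair u < v by the number of edges of a longest tight path ending in u, v.
  If G contains no tight path with s - 2 edges, these labels lie in {0..s-3}, and every edge
  u < v < w of G is a good triple, because a longest path ending in u, v extends through w.
  Conversely, the good triples of a labeling form a hypergraph in which labels strictly increase
  along the consecutive pairs of a tight path; so a tight path with s - 2 edges would end in a
  pair with label at least s - 2, which is impossible with s - 2 labels. *)

lemma card_3_sorted:
  fixes e :: "'a::linorder set"
  assumes "card e = 3"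
  obtains u v w where "u < v" "v < w" "e = {u, v, w}"
proof -
  define xs where "xs = sorted_list_of_set e"
  have "finite e" using assms by (intro card_ge_0_finite) simp
  then have xs: "length xs = 3" "sorted_wrt (<) xs" "set xs = e"
    using assms by (simp_all add: xs_def)
  then obtain u v w where "xs = [u, v, w]"
    by (metis (no_types) length_0_conv length_Suc_conv numeral_3_eq_3)
  with xs that show thesis by auto
qed

lemma sorted_triple_eq:
  fixes a b c u v w :: "'a::linorder"
  assumes "a < b" "b < c" "u < v" "v < w" "{a, b, c} = {u, v, w}"
  shows "a = u \<and> b = v \<and> c = w"
proof -
  have "a \<in> {u, v, w}" "b \<in> {u, v, w}" "c \<in> {u, v, w}"
    and "u \<in> {a, b, c}" "v \<in> {a, b, c}" "w \<in> {a, b, c}"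
    using assms(5) by blast+
  with assms(1-4) show ?thesis by auto
qed

definition tight_path_in :: "nat \<Rightarrow> nat set set \<Rightarrow> (nat \<Rightarrow> nat) \<Rightarrow> nat \<Rightarrow> bool" where
  "tight_path_in n G g t \<longleftrightarrow> strict_mono_on {1..t+2} g \<and> g ` {1..t+2} \<subseteq> {1..n}
     \<and> (\<forall>j\<in>{1..t}. {g j, g (j+1), g (j+2)} \<in> G)"

lemma tight_path_in_mono:
  assumes "tight_path_in n G g t" "t' \<le> t"
  shows "tight_path_in n G g t'"
  using assms unfolding tight_path_in_def strict_mono_on_def by auto

lemma tight_path_in_length_le:
  assumes "tight_path_in n G g t"
  shows "t + 2 \<le> n"
proof -
  have "inj_on g {1..t+2}" "g ` {1..t+2} \<subseteq> {1..n}"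
    using assms strict_mono_on_imp_inj_on unfolding tight_path_in_def by blast+
  then show ?thesis
    using card_inj_on_le[of g "{1..t+2}" "{1..n}"] by simp
qed

lemma tight_path_in_last_pair:
  assumes "tight_path_in n G g t"
  shows "1 \<le> g (t+1)" "g (t+1) < g (t+2)" "g (t+2) \<le> n"
proof -
  have ends: "t+1 \<in> {1..t+2}" "t+2 \<in> {1..t+2}" "t+1 < t+2" by auto
  with assms show "g (t+1) < g (t+2)"
    unfolding tight_path_in_def by (meson strict_mono_onD)
  from ends assms have "g (t+1) \<in> {1..n}" "g (t+2) \<in> {1..n}"
    unfolding tight_path_in_def by blast+
  then show "1 \<le> g (t+1)" "g (t+2) \<le> n" by simp_all
qed

lemma ord_contains_tight_path_iff:
  assumes "s \<ge> 2"
  shows "ord_contains n G s (tight_path s) \<longleftrightarrow> (\<exists>g. tight_path_in n G g (s - 2))"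
proof -
  have edges: "(\<forall>e\<in>tight_path s. g ` e \<in> G) \<longleftrightarrow> (\<forall>j\<in>{1..s-2}. {g j, g (j+1), g (j+2)} \<in> G)"
    for g :: "nat \<Rightarrow> nat"
  proof -
    have "(\<forall>e\<in>tight_path s. g ` e \<in> G) \<longleftrightarrow> (\<forall>j. 1 \<le> j \<and> j + 2 \<le> s \<longrightarrow> g ` {j, j+1, j+2} \<in> G)"
      unfolding tight_path_def by blast
    also have "\<dots> \<longleftrightarrow> (\<forall>j\<in>{1..s-2}. {g j, g (j+1), g (j+2)} \<in> G)"
      using assms by auto
    finally show ?thesis .
  qed
  have "s - 2 + 2 = s" using assms by simp
  then show ?thesis
    unfolding ord_contains_def tight_path_in_def edges by metis
qed

lemma tight_path_in_pair:
  assumes "1 \<le> u" "u < v" "v \<le> n"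
  shows "tight_path_in n G (\<lambda>i. if i = 1 then u else v) 0"
  using assms unfolding tight_path_in_def strict_mono_on_def by auto

lemma tight_path_in_extend:
  assumes path: "tight_path_in n G g t" and "g (t+2) = v"
    and edge: "{g (t+1), v, w} \<in> G" and "v < w" "w \<le> n"
  shows "tight_path_in n G (g(t+3 := w)) (t+1)"
proof -
  have sm: "strict_mono_on {1..t+2} g"
    using path unfolding tight_path_in_def by blast
  have below_w: "g x < w" if "x \<in> {1..t+2}" for x
  proof -
    have "g x \<le> g (t+2)"
      using that by (intro strict_mono_on_leD[OF sm]) auto
    with assms show ?thesis by simp
  qed
  let ?h = "g(t+3 := w)"
  have "strict_mono_on {1..t+1+2} ?h"
    using sm below_w unfolding strict_mono_on_def by fastforce
  moreover have "?h ` {1..t+1+2} \<subseteq> {1..n}"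
    using path below_w \<open>w \<le> n\<close> unfolding tight_path_in_def by (fastforce simp: le_Suc_eq)
  moreover have "\<forall>j\<in>{1..t+1}. {?h j, ?h (j+1), ?h (j+2)} \<in> G"
    using path edge assms unfolding tight_path_in_def by (auto simp: le_Suc_eq)
  ultimately show ?thesis
    unfolding tight_path_in_def by blast
qed

definition longest_tight_path_to :: "nat \<Rightarrow> nat set set \<Rightarrow> nat \<Rightarrow> nat \<Rightarrow> nat" where
  "longest_tight_path_to n G u v = Max {t. \<exists>g. tight_path_in n G g t \<and> g (t+1) = u \<and> g (t+2) = v}"

lemma finite_tight_path_lengths: "finite {t. \<exists>g. tight_path_in n G g t \<and> P g t}"
  by (rule finite_subset[of _ "{..n}"]) (auto dest: tight_path_in_length_le)

lemma longest_tight_path_to_ge: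
  assumes "tight_path_in n G g t"
  shows "t \<le> longest_tight_path_to n G (g (t+1)) (g (t+2))"
  unfolding longest_tight_path_to_def using assms by (intro Max_ge finite_tight_path_lengths) blast

lemma longest_tight_path_to_attained:
  assumes "1 \<le> u" "u < v" "v \<le> n"
  obtains g where "tight_path_in n G g (longest_tight_path_to n G u v)"
    "g (longest_tight_path_to n G u v + 1) = u" "g (longest_tight_path_to n G u v + 2) = v"
proof -
  have "0 \<in> {t. \<exists>g. tight_path_in n G g t \<and> g (t+1) = u \<and> g (t+2) = v}"
    using tight_path_in_pair[OF assms] by fastforce
  then have "longest_tight_path_to n G u v \<in> {t. \<exists>g. tight_path_in n G g t \<and> g (t+1) = u \<and> g (t+2) = v}"
    unfolding longest_tight_path_to_def by (intro Max_in finite_tight_path_lengths) blast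
  with that show thesis by blast
qed

definition good_hypergraph :: "nat \<Rightarrow> (nat \<Rightarrow> nat \<Rightarrow> nat) \<Rightarrow> nat set set" where
  "good_hypergraph n \<phi> = (\<lambda>(u, v, w). {u, v, w}) ` good_triples n \<phi>"

lemma finite_good_triples: "finite (good_triples n \<phi>)"
  by (rule finite_subset[of _ "{1..n} \<times> {1..n} \<times> {1..n}"]) (auto simp: good_triples_def)

lemma finite_good_hypergraph: "finite (good_hypergraph n \<phi>)"
  unfolding good_hypergraph_def by (rule finite_imageI[OF finite_good_triples])

lemma ord_hypergraph3_good_hypergraph: "ord_hypergraph3 n (good_hypergraph n \<phi>)"
  unfolding ord_hypergraph3_def triples_def good_hypergraph_def good_triples_def by auto

lemma card_good_hypergraph: "card (good_hypergraph n \<phi>) = card (good_triples n \<phi>)"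
proof -
  have "inj_on (\<lambda>(u, v, w). {u, v, w}) (good_triples n \<phi>)"
    by (rule inj_onI) (auto simp: good_triples_def dest: sorted_triple_eq)
  then show ?thesis
    unfolding good_hypergraph_def by (rule card_image)
qed

lemma good_hypergraph_edge_label_less:
  assumes "{a, b, c} \<in> good_hypergraph n \<phi>" "a < b" "b < c"
  shows "\<phi> a b < \<phi> b c"
  using assms unfolding good_hypergraph_def good_triples_def by (auto dest: sorted_triple_eq)

lemma card_le_card_good_triples_longest_tight_path_to:
  assumes "ord_hypergraph3 n G"
  shows "card G \<le> card (good_triples n (longest_tight_path_to n G))"
proof -
  let ?\<phi> = "longest_tight_path_to n G"
  have "G \<subseteq> good_hypergraph n ?\<phi>"
  proof
    fix e assume "e \<in> G"
    with assms have e: "e \<subseteq> {1..n}" "card e = 3"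
      unfolding ord_hypergraph3_def triples_def by auto
    obtain u v w where uvw: "u < v" "v < w" "e = {u, v, w}"
      using card_3_sorted[OF e(2)] by blast
    with e have range: "1 \<le> u" "v \<le> n" "w \<le> n" by auto
    obtain g where g: "tight_path_in n G g (?\<phi> u v)" "g (?\<phi> u v + 1) = u" "g (?\<phi> u v + 2) = v"
      by (rule longest_tight_path_to_attained[OF range(1) uvw(1) range(2)])
    have "tight_path_in n G (g(?\<phi> u v + 3 := w)) (?\<phi> u v + 1)"
      using tight_path_in_extend[OF g(1,3)] g(2) uvw \<open>e \<in> G\<close> range by simp
    from longest_tight_path_to_ge[OF this]
    have "?\<phi> u v + 1 \<le> ?\<phi> v w" using g(3) by (simp add: numeral_eq_Suc)
    with uvw range have "(u, v, w) \<in> good_triples n ?\<phi>"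
      unfolding good_triples_def by simp
    then show "e \<in> good_hypergraph n ?\<phi>"
      unfolding good_hypergraph_def uvw(3) by (rule rev_image_eqI) simp
  qed
  then have "card G \<le> card (good_hypergraph n ?\<phi>)"
    by (rule card_mono[OF finite_good_hypergraph])
  then show ?thesis
    by (simp add: card_good_hypergraph)
qed

lemma edge_labeling_longest_tight_path_to:
  assumes "s \<ge> 2" "\<not> ord_contains n G s (tight_path s)"
  shows "edge_labeling n (s - 2) (longest_tight_path_to n G)"
  unfolding edge_labeling_def
proof (intro allI impI, elim conjE)
  fix u v assume "1 \<le> u" "u < v" "v \<le> n"
  then obtain g where "tight_path_in n G g (longest_tight_path_to n G u v)"
    by (rule longest_tight_path_to_attained)
  then show "longest_tight_path_to n G u v < s - 2"
    using assms ord_contains_tight_path_iff tight_path_in_mono not_less by metis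
qed

lemma tight_path_in_good_hypergraph_label_ge:
  assumes "tight_path_in n (good_hypergraph n \<phi>) g t"
  shows "t \<le> \<phi> (g (t+1)) (g (t+2))"
  using assms
proof (induction t)
  case 0
  then show ?case by simp
next
  case (Suc t)
  then have "t \<le> \<phi> (g (t+1)) (g (t+2))"
    by (meson le_SucI order_refl tight_path_in_mono)
  moreover have "\<phi> (g (t+1)) (g (t+2)) < \<phi> (g (t+2)) (g (t+3))"
  proof -
    have "{g (t+1), g (t+2), g (t+3)} \<in> good_hypergraph n \<phi>"
      using Suc.prems unfolding tight_path_in_def by (auto simp: numeral_eq_Suc)
    moreover have "g (t+1) < g (t+2)"
      using tight_path_in_last_pair(2)[OF tight_path_in_mono[OF Suc.prems]] by simp
    moreover have "g (t+2) < g (t+3)"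
      using tight_path_in_last_pair(2)[OF Suc.prems] by (simp add: numeral_eq_Suc)
    ultimately show ?thesis
      by (rule good_hypergraph_edge_label_less)
  qed
  ultimately show ?case by (simp add: numeral_eq_Suc)
qed

lemma good_hypergraph_not_contains_tight_path:
  assumes "s \<ge> 2" "edge_labeling n (s - 2) \<phi>"
  shows "\<not> ord_contains n (good_hypergraph n \<phi>) s (tight_path s)"
proof
  assume "ord_contains n (good_hypergraph n \<phi>) s (tight_path s)"
  then obtain g where g: "tight_path_in n (good_hypergraph n \<phi>) g (s - 2)"
    using ord_contains_tight_path_iff[OF assms(1)] by blast
  then have "s - 2 \<le> \<phi> (g (s-2+1)) (g (s-2+2))"
    by (rule tight_path_in_good_hypergraph_label_ge)
  moreover note tight_path_in_last_pair[OF g]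
  ultimately show False
    using assms(2) unfolding edge_labeling_def by (meson not_less)
qed

lemma Max_le_Max_if_cofinal:
  fixes f :: "'a \<Rightarrow> 'c::linorder" and g :: "'b \<Rightarrow> 'c"
  assumes fin: "finite {f x | x. P x}" "finite {g y | y. Q y}" and "P x\<^sub>0"
    and f_le_g: "\<And>x. P x \<Longrightarrow> \<exists>y. Q y \<and> f x \<le> g y"
  shows "Max {f x | x. P x} \<le> Max {g y | y. Q y}"
proof (rule Max.boundedI[OF fin(1)])
  show "{f x | x. P x} \<noteq> {}"
    using \<open>P x\<^sub>0\<close> by blast
next
  fix a assume "a \<in> {f x | x. P x}"
  then obtain x where "P x" "a = f x" by blast
  with f_le_g obtain y where "Q y" "a \<le> g y" by blast
  moreover have "g y \<le> Max {g y | y. Q y}"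
    using fin(2) \<open>Q y\<close> by (intro Max_ge) blast+
  ultimately show "a \<le> Max {g y | y. Q y}"
    by simp
qed

lemma Max_eq_if_cofinal:
  fixes f :: "'a \<Rightarrow> 'c::linorder" and g :: "'b \<Rightarrow> 'c"
  assumes fin: "finite {f x | x. P x}" "finite {g y | y. Q y}" and "P x\<^sub>0"
    and f_le_g: "\<And>x. P x \<Longrightarrow> \<exists>y. Q y \<and> f x \<le> g y"
    and g_le_f: "\<And>y. Q y \<Longrightarrow> \<exists>x. P x \<and> g y \<le> f x"
  shows "Max {f x | x. P x} = Max {g y | y. Q y}"
proof -
  obtain y\<^sub>0 where "Q y\<^sub>0"
    using f_le_g[OF \<open>P x\<^sub>0\<close>] by blast
  show ?thesis
    using Max_le_Max_if_cofinal[OF fin \<open>P x\<^sub>0\<close> f_le_g]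
      Max_le_Max_if_cofinal[OF fin(2,1) \<open>Q y\<^sub>0\<close> g_le_f]
    by (rule antisym)
qed

lemma finite_card_hypergraphs: "finite {card G | G. ord_hypergraph3 n G \<and> P G}"
proof -
  have "finite (triples n)"
    by (rule finite_subset[of _ "Pow {1..n}"]) (auto simp: triples_def)
  then have "finite (card ` Pow (triples n))" by simp
  then show ?thesis
    by (rule rev_finite_subset) (unfold ord_hypergraph3_def, blast)
qed

lemma finite_card_good_triples: "finite {card (good_triples n \<phi>) | \<phi>. P \<phi>}"
proof -
  have "card (good_triples n \<phi>) \<le> card ({1..n} \<times> {1..n} \<times> {1..n})" for \<phi>
    by (rule card_mono) (auto simp: good_triples_def)
  then have "{card (good_triples n \<phi>) | \<phi>. P \<phi>} \<subseteq> {..n * (n * n)}"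
    by auto
  then show ?thesis
    using finite_subset by blast
qed

theorem proposition4p1:
  fixes n s :: nat
  assumes "s \<ge> 3"
  shows "ex3 n s (tight_path s) = f_good n (s - 2)"
proof -
  have s2: "s \<ge> 2" and "edge_labeling n (s - 2) (\<lambda>_ _. 0)"
    using assms unfolding edge_labeling_def by simp_all
  then have "ord_hypergraph3 n (good_hypergraph n (\<lambda>_ _. 0))
      \<and> \<not> ord_contains n (good_hypergraph n (\<lambda>_ _. 0)) s (tight_path s)"
    using ord_hypergraph3_good_hypergraph good_hypergraph_not_contains_tight_path by blast
  then show ?thesis
    unfolding ex3_def f_good_def
  proof (rule Max_eq_if_cofinal[OF finite_card_hypergraphs finite_card_good_triples])
    fix G assume "ord_hypergraph3 n G \<and> \<not> ord_contains n G s (tight_path s)"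
    then show "\<exists>\<phi>. edge_labeling n (s - 2) \<phi> \<and> card G \<le> card (good_triples n \<phi>)"
      using edge_labeling_longest_tight_path_to[OF s2] card_le_card_good_triples_longest_tight_path_to
      by blast
  next
    fix \<phi> assume "edge_labeling n (s - 2) \<phi>"
    then show "\<exists>G. (ord_hypergraph3 n G \<and> \<not> ord_contains n G s (tight_path s))
        \<and> card (good_triples n \<phi>) \<le> card G"
      using ord_hypergraph3_good_hypergraph good_hypergraph_not_contains_tight_path[OF s2]
      by (metis card_good_hypergraph order_refl)
  qed
qed

end
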